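(* Let $\mathbf I_F$ be a generalized Fisher information that is weakly faithful and subadditive on product-state families. Let $\{\mathcal N^\theta_{A\to B}\}_\theta$ be an environment-seizable channel family with environment state family $\{\rho^\theta_E\}_\theta$. Then $$\mathbf I^{\mathcal A}_F(\theta;\{\mathcal N^\theta_{A\to B}\}_\theta)=\mathbf I_F(\theta;\{\rho^\theta_E\}_\theta).$$
   Context: Finite-dimensional systems. A generalized Fisher information $\mathbf I_F$ assigns to each $\theta$ and family $\{\rho^\theta\}_\theta$ of density operators an extended real number with $\mathbf I_F(\theta;\{\rho^\theta_A\}_\theta)\ge\mathbf I_F(\theta;\{\mathcal K_{A\to B}(\rho^\theta_A)\}_\theta)$ for every $\theta$-independent channel $\mathcal K$; weakly faithful means it vanishes on $\theta$-independent families; subadditive on product-state families means $\mathbf I_F(\theta;\{\omega^\theta\otimes\tau^\theta\}_\theta)\le\mathbf I_F(\theta;\{\omega^\theta\}_\theta)+\mathbf I_F(\theta;\{\tau^\theta\}_\theta)$. Amortized Fisher information: $\mathbf I^{\mathcal A}_F(\theta;\{\mathcal N^\theta_{A\to B}\}_\theta):=\sup_{\{\rho^\theta_{RA}\}_\theta}[\mathbf I_F(\theta;\{\mathcal N^\theta_{A\to B}(\rho^\theta_{RA})\}_\theta)-\mathbf I_F(\theta;\{\rho^\theta_{RA}\}_\theta)]$ over state families with arbitrary reference $R$. The family is environment-parameterized with environment states $\{\rho^\theta_E\}_\theta$ if there is a $\theta$-independent channel $\mathcal M_{AE\to B}$ with $\mathcal N^\theta_{A\to B}(\omega_A)=\mathcal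 M_{AE\to B}(\omega_A\otimes\rho^\theta_E)$ for all inputs (acting as identity on any reference system); it is environment-seizable if moreover there exist a $\theta$-independent state $\zeta_{RA}$ and a $\theta$-independent channel $\mathcal D_{RB\to E}$ with $\mathcal D_{RB\to E}(\mathcal N^\theta_{A\to B}(\zeta_{RA}))=\rho^\theta_E$ for all $\theta$. *)

theory Defs
  imports Complex_Main "HOL-Library.Extended_Real" "Jordan_Normal_Form.Matrix"
begin

text \<open>Finite-dimensional quantum systems are given by their dimension (a positive
natural number).
A composite system XY has dimension dX * dY, with the tensor product realised by the
Kronecker product (first factor = most significant index).\<close>

definition mtrace :: "complex mat \<Rightarrow> complex" where
  "mtrace A = (\<Sum>i<dim_row A. A $$ (i, i))"

definition psd :: "nat \<Rightarrow> complex mat \<Rightarrow> bool" where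
  "psd n A \<longleftrightarrow> A \<in> carrier_mat n n \<and>
     (\<forall>v. dim_vec v = n \<longrightarrow> (A *\<^sub>v v) \<bullet>c v \<in> \<real> \<and> 0 \<le> Re ((A *\<^sub>v v) \<bullet>c v))"

definition density :: "nat \<Rightarrow> complex mat \<Rightarrow> bool" where
  "density n A \<longleftrightarrow> psd n A \<and> mtrace A = 1"

definition kron :: "complex mat \<Rightarrow> complex mat \<Rightarrow> complex mat" where
  "kron A B = mat (dim_row A * dim_row B) (dim_col A * dim_col B)
     (\<lambda>(i, j). A $$ (i div dim_row B, j div dim_col B) * B $$ (i mod dim_row B, j mod dim_col B))"

definition block :: "nat \<Rightarrow> complex mat \<Rightarrow> nat \<Rightarrow> nat \<Rightarrow> complex mat" where
  "block d X i j = mat d d (\<lambda>(a, b). X $$ (i * d + a, j * d + b))"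

text \<open>(id_R \<otimes> K)(X) for a map K from dA x dA to dB x dB matrices, where R has
dimension dR and X is a (dR*dA) x (dR*dA) matrix on R \<otimes> A.\<close>
definition id_tensor :: "nat \<Rightarrow> nat \<Rightarrow> nat \<Rightarrow> (complex mat \<Rightarrow> complex mat) \<Rightarrow> complex mat \<Rightarrow> complex mat" where
  "id_tensor dR dA dB K X = mat (dR * dB) (dR * dB)
     (\<lambda>(r, c). K (block dA X (r div dB) (c div dB)) $$ (r mod dB, c mod dB))"

definition channel :: "nat \<Rightarrow> nat \<Rightarrow> (complex mat \<Rightarrow> complex mat) \<Rightarrow> bool" where
  "channel dA dB K \<longleftrightarrow> 0 < dA \<and> 0 < dB \<and>
     (\<forall>X \<in> carrier_mat dA dA. K X \<in> carrier_mat dB dB \<and> mtrace (K X) = mtrace X) \<and>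
     (\<forall>X \<in> carrier_mat dA dA. \<forall>Y \<in> carrier_mat dA dA. \<forall>a b :: complex.
        K (a \<cdot>\<^sub>m X + b \<cdot>\<^sub>m Y) = a \<cdot>\<^sub>m K X + b \<cdot>\<^sub>m K Y) \<and>
     (\<forall>dR X. 0 < dR \<longrightarrow> psd (dR * dA) X \<longrightarrow> psd (dR * dB) (id_tensor dR dA dB K X))"

type_synonym fisher = "real \<Rightarrow> (real \<Rightarrow> complex mat) \<Rightarrow> ereal"

definition gen_fisher :: "fisher \<Rightarrow> bool" where
  "gen_fisher I \<longleftrightarrow> (\<forall>\<theta> dA dB (K :: complex mat \<Rightarrow> complex mat) \<rho>.
     channel dA dB K \<longrightarrow> (\<forall>t. density dA (\<rho> t)) \<longrightarrow> I \<theta> (\<lambda>t. K (\<rho> t)) \<le> I \<theta> \<rho>)"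

definition weakly_faithful :: "fisher \<Rightarrow> bool" where
  "weakly_faithful I \<longleftrightarrow> (\<forall>\<theta> d \<sigma>. density d \<sigma> \<longrightarrow> I \<theta> (\<lambda>t. \<sigma>) = 0)"

definition subadditive_product :: "fisher \<Rightarrow> bool" where
  "subadditive_product I \<longleftrightarrow> (\<forall>\<theta> m n \<omega> \<tau>.
     (\<forall>t. density m (\<omega> t)) \<longrightarrow> (\<forall>t. density n (\<tau> t)) \<longrightarrow>
     I \<theta> (\<lambda>t. kron (\<omega> t) (\<tau> t)) \<le> I \<theta> \<omega> + I \<theta> \<tau>)"

text \<open>Families with
infinite input Fisher information are excluded, since the difference is then the
undefined expression \<infinity> - \<infinity> (Isabelle's ereal would set it to \<infinity>).\<close>
definition amortized_fisher :: "fisher \<Rightarrow> nat \<Rightarrow> nat \<Rightarrow> real \<Rightarrow> (real \<Rightarrow> complex mat \<Rightarrow> complex mat) \<Rightarrow> ereal" where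
  "amortized_fisher I dA dB \<theta> N = (SUP p \<in> {(dR, \<rho>). 0 < dR \<and> (\<forall>t. density (dR * dA) (\<rho> t)) \<and> I \<theta> \<rho> < \<infinity>}.
     I \<theta> (\<lambda>t. id_tensor (fst p) dA dB (N t) (snd p t)) - I \<theta> (snd p))"

definition env_parameterized :: "nat \<Rightarrow> nat \<Rightarrow> nat \<Rightarrow> (real \<Rightarrow> complex mat \<Rightarrow> complex mat)
     \<Rightarrow> (real \<Rightarrow> complex mat) \<Rightarrow> (complex mat \<Rightarrow> complex mat) \<Rightarrow> bool" where
  "env_parameterized dA dB dE N \<rho>E M \<longleftrightarrow>
     channel (dA * dE) dB M \<and> (\<forall>t. channel dA dB (N t)) \<and> (\<forall>t. density dE (\<rho>E t)) \<and>
     (\<forall>t dR \<omega>. 0 < dR \<longrightarrow> density (dR * dA) \<omega> \<longrightarrow>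
        id_tensor dR dA dB (N t) \<omega> = id_tensor dR (dA * dE) dB M (kron \<omega> (\<rho>E t)))"

definition env_seizable :: "nat \<Rightarrow> nat \<Rightarrow> nat \<Rightarrow> (real \<Rightarrow> complex mat \<Rightarrow> complex mat)
     \<Rightarrow> (real \<Rightarrow> complex mat) \<Rightarrow> bool" where
  "env_seizable dA dB dE N \<rho>E \<longleftrightarrow>
     (\<exists>M. env_parameterized dA dB dE N \<rho>E M) \<and>
     (\<exists>dR \<zeta> D. 0 < dR \<and> density (dR * dA) \<zeta> \<and> channel (dR * dB) dE D \<and>
        (\<forall>t. D (id_tensor dR dA dB (N t) \<zeta>) = \<rho>E t))"

end

theory Submission
  imports Defs
begin

text \<open>By data processing through the environment-parameterized form and subadditivity,
\<open>I(N(\<rho>)) \<le> I(\<rho> \<otimes> \<rho>E) \<le> I(\<rho>) + I(\<rho>E)\<close>, so every amortized gain is at most \<open>I(\<rho>E)\<close>; the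
subtraction is harmless because Fisher information is nonnegative (trace out to a constant
family) and the admissible inputs have finite information. Conversely, the seizing input
\<open>\<zeta>\<close> is a constant family with zero information, and the seizing channel maps \<open>N(\<zeta>)\<close> back to
\<open>\<rho>E\<close>, so its gain \<open>I(N(\<zeta>))\<close> is at least \<open>I(\<rho>E)\<close>. That \<open>\<rho> \<otimes> \<rho>E\<close> is again a state rests
on a Gram (Cholesky) decomposition of positive semidefinite matrices.\<close>

section \<open>Positive semidefinite kernels\<close>

text \<open>Matrices are handled through their entry functions on index ranges; this keeps the
index manipulations free of carrier bookkeeping.\<close>

definition quad_form :: "nat \<Rightarrow> (nat \<Rightarrow> nat \<Rightarrow> complex) \<Rightarrow> (nat \<Rightarrow> complex) \<Rightarrow> complex" where
  "quad_form n f v = (\<Sum>i<n. \<Sum>j<n. cnj (v i) * f i j * v j)"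

definition psd_kernel :: "nat \<Rightarrow> (nat \<Rightarrow> nat \<Rightarrow> complex) \<Rightarrow> bool" where
  "psd_kernel n f \<longleftrightarrow> (\<forall>v. 0 \<le> quad_form n f v)"

lemma nonneg_complex_iff: "0 \<le> (z::complex) \<longleftrightarrow> z \<in> \<real> \<and> 0 \<le> Re z"
  by (auto simp: less_eq_complex_def complex_is_Real_iff)

lemma quad_form_cong:
  "(\<And>i. i < n \<Longrightarrow> v i = w i) \<Longrightarrow> quad_form n f v = quad_form n f w"
  unfolding quad_form_def by (intro sum.cong refl) auto

lemma cscalar_prod_mult_mat_vec:
  assumes "A \<in> carrier_mat n n" "dim_vec w = n"
  shows "(A *\<^sub>v w) \<bullet>c w = quad_form n (\<lambda>i j. A $$ (i,j)) (\<lambda>i. w $ i)"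
  using assms
  by (simp add: quad_form_def scalar_prod_def mult_mat_vec_def row_def sum_distrib_right
      sum_distrib_left lessThan_atLeast0 mult.commute mult.left_commute)

lemma psd_iff_psd_kernel: "psd n A \<longleftrightarrow> A \<in> carrier_mat n n \<and> psd_kernel n (\<lambda>i j. A $$ (i,j))"
proof (cases "A \<in> carrier_mat n n")
  case True
  let ?F = "\<lambda>i j. A $$ (i,j)"
  have kernel: "quad_form n ?F v = (A *\<^sub>v vec n v) \<bullet>c vec n v" for v
  proof -
    have "quad_form n ?F v = quad_form n ?F (\<lambda>i. vec n v $ i)"
      by (rule quad_form_cong) simp
    also have "\<dots> = (A *\<^sub>v vec n v) \<bullet>c vec n v"
      using cscalar_prod_mult_mat_vec[OF True] by simp
    finally show ?thesis .
  qed
  have "(\<forall>w. dim_vec w = n \<longrightarrow> 0 \<le> (A *\<^sub>v w) \<bullet>c w) \<longleftrightarrow> psd_kernel n ?F"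
  proof
    assume "\<forall>w. dim_vec w = n \<longrightarrow> 0 \<le> (A *\<^sub>v w) \<bullet>c w"
    then show "psd_kernel n ?F"
      unfolding psd_kernel_def kernel by simp
  next
    assume "psd_kernel n ?F"
    then show "\<forall>w. dim_vec w = n \<longrightarrow> 0 \<le> (A *\<^sub>v w) \<bullet>c w"
      unfolding psd_kernel_def using cscalar_prod_mult_mat_vec[OF True] by simp
  qed
  with True show ?thesis
    unfolding psd_def nonneg_complex_iff by simp
qed (simp add: psd_def)

lemma sum_mult_delta_right:
  "q < (n::nat) \<Longrightarrow> (\<Sum>j<n. g j * (if j = q then c else 0)) = g q * (c::'a::semiring_0)"
  by (subst sum.mono_neutral_right[of "{..<n}" "{q}"]) auto

lemma sum_delta_mult_left:
  "q < (n::nat) \<Longrightarrow> (\<Sum>j<n. (if j = q then c else 0) * g j) = (c::'a::semiring_0) * g q"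
  by (subst sum.mono_neutral_right[of "{..<n}" "{q}"]) auto

lemma quad_form_supported:
  assumes "S \<subseteq> {..<n}" and "\<And>i. i \<notin> S \<Longrightarrow> u i = 0"
  shows "quad_form n f u = (\<Sum>i\<in>S. \<Sum>j\<in>S. cnj (u i) * f i j * u j)"
  unfolding quad_form_def
  using assms by (intro sum.mono_neutral_cong_right) (auto intro!: sum.mono_neutral_cong_right)

lemma quad_form_single:
  "a < n \<Longrightarrow> quad_form n f (\<lambda>i. if i = a then x else 0) = cnj x * f a a * x"
  by (subst quad_form_supported[of "{a}"]) auto

lemma quad_form_pair:
  assumes "a < n" "b < n" "a \<noteq> b"
  shows "quad_form n f (\<lambda>i. if i = a then x else if i = b then y else 0) =
    cnj x * f a a * x + cnj x * f a b * y + cnj y * f b a * x + cnj y * f b b * y"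
  using assms by (subst quad_form_supported[of "{a, b}"]) auto

lemma quad_form_add:
  "quad_form n f (\<lambda>i. v i + w i) = quad_form n f v + quad_form n f w
     + (\<Sum>i<n. \<Sum>j<n. cnj (v i) * f i j * w j) + (\<Sum>i<n. \<Sum>j<n. cnj (w i) * f i j * v j)"
  unfolding quad_form_def by (simp add: algebra_simps sum.distrib)

lemma quad_form_diff_rank_one:
  "quad_form n (\<lambda>i j. f i j - g i * h j) v
     = quad_form n f v - (\<Sum>i<n. cnj (v i) * g i) * (\<Sum>j<n. h j * v j)"
  unfolding quad_form_def
  by (simp add: algebra_simps sum_subtractf sum_distrib_left sum_distrib_right)

lemma psd_kernel_diag_nonneg:
  assumes "psd_kernel n f" "a < n"
  shows "0 \<le> f a a"
proof -
  have "0 \<le> quad_form n f (\<lambda>i. if i = a then 1 else 0)"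
    using assms(1) unfolding psd_kernel_def by blast
  then show ?thesis
    using quad_form_single[OF assms(2), of f 1] by simp
qed

lemma psd_kernel_hermitian:
  assumes "psd_kernel n f" "a < n" "b < n"
  shows "f b a = cnj (f a b)"
proof (cases "a = b")
  case True
  then show ?thesis
    using psd_kernel_diag_nonneg[OF assms(1,2)] by (simp add: less_eq_complex_def complex_eq_iff)
next
  case False
  have "0 \<le> quad_form n f (\<lambda>i. if i = a then 1 else if i = b then 1 else 0)"
    "0 \<le> quad_form n f (\<lambda>i. if i = a then 1 else if i = b then \<i> else 0)"
    using assms(1) unfolding psd_kernel_def by blast+
  then have "Im (f a a + f a b + f b a + f b b) = 0" "Im (f a a + \<i> * f a b - \<i> * f b a + f b b) = 0"
    unfolding quad_form_pair[OF assms(2,3) False] by (auto simp: less_eq_complex_def algebra_simps)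
  then show ?thesis
    using psd_kernel_diag_nonneg[OF assms(1,2)] psd_kernel_diag_nonneg[OF assms(1,3)]
    by (simp add: less_eq_complex_def complex_eq_iff)
qed

lemma psd_kernel_zero_diag_imp_zero_column:
  assumes psd: "psd_kernel n f" and q: "q < n" and j: "j < n" and zero: "f q q = 0"
  shows "f j q = 0"
proof (rule ccontr)
  assume ne: "f j q \<noteq> 0"
  then have "j \<noteq> q" using zero by auto
  define c where "c = f j q"
  \<comment> \<open>Pushing weight \<open>t\<close> onto the null direction \<open>q\<close> makes the form linear in \<open>t\<close>, hence unbounded below.\<close>
  define t where "t = - complex_of_real ((Re (f j j) + 1) / (cmod c)\<^sup>2) * cnj c"
  have "0 \<le> quad_form n f (\<lambda>i. if i = j then 1 else if i = q then t else 0)"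
    using psd unfolding psd_kernel_def by blast
  then have "0 \<le> Re (f j j + c * t + cnj t * f q j)"
    unfolding quad_form_pair[OF j q \<open>j \<noteq> q\<close>] using zero by (simp add: less_eq_complex_def c_def)
  moreover have "c * t = - complex_of_real (Re (f j j) + 1)"
  proof -
    have "c * cnj c = complex_of_real ((cmod c)\<^sup>2)" using complex_norm_square[of c] by simp
    then show ?thesis using ne unfolding t_def c_def[symmetric] by (simp add: field_simps)
  qed
  moreover have "cnj t * f q j = cnj (c * t)"
    using psd_kernel_hermitian[OF psd q j] c_def by simp
  ultimately show False
    using psd_kernel_diag_nonneg[OF psd j] by (simp add: less_eq_complex_def)
qed

lemma psd_kernel_schur_complement:
  assumes psd: "psd_kernel n f" and q: "q < n"
  shows "psd_kernel n (\<lambda>i j. f i j - f i q * f q j / f q q)"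
proof (cases "f q q = 0")
  case True
  then show ?thesis using psd by simp
next
  case False
  define a where "a = f q q"
  have a_real: "cnj a = a"
    using psd_kernel_diag_nonneg[OF psd q] by (simp add: a_def less_eq_complex_def complex_eq_iff)
  show ?thesis unfolding psd_kernel_def
  proof
    fix v
    define S where "S = (\<Sum>j<n. f q j * v j)"
    define c where "c = - S / a"
    have S_cnj: "(\<Sum>i<n. cnj (v i) * f i q) = cnj S"
      unfolding S_def using psd_kernel_hermitian[OF psd q] by (simp add: mult.commute)
    have "quad_form n (\<lambda>i j. f i j - f i q * f q j / f q q) v = quad_form n f v - cnj S * S / a"
    proof -
      have "(\<Sum>j<n. f q j / f q q * v j) = S / a"
        unfolding S_def a_def by (simp add: sum_divide_distrib)
      then show ?thesis
        using quad_form_diff_rank_one[of n f "\<lambda>i. f i q" "\<lambda>j. f q j / f q q" v]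
        unfolding S_cnj by (simp add: a_def)
    qed
    also have "\<dots> = quad_form n f v + cnj c * a * c + cnj S * c + cnj c * S"
      using False a_real unfolding a_def c_def by (simp add: field_simps)
    also have "\<dots> = quad_form n f (\<lambda>i. v i + (if i = q then c else 0))"
    proof -
      have "(\<Sum>i<n. \<Sum>j<n. cnj (v i) * f i j * (if j = q then c else 0)) = cnj S * c"
        using q by (simp add: sum_mult_delta_right S_cnj[symmetric] sum_distrib_right)
      moreover have "(\<Sum>i<n. \<Sum>j<n. cnj (if i = q then c else 0) * f i j * v j) = cnj c * S"
      proof -
        have "cnj (if i = q then c else 0) = (if i = q then cnj c else 0)" for i by simp
        then show ?thesis
          using q by (simp add: mult.assoc sum_distrib_left[symmetric] sum_delta_mult_left S_def)
      qed
      ultimately show ?thesis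
        unfolding quad_form_add quad_form_single[OF q] a_def by simp
    qed
    finally show "0 \<le> quad_form n (\<lambda>i j. f i j - f i q * f q j / f q q) v"
      using psd unfolding psd_kernel_def by simp
  qed
qed

lemma schur_complement_vanishes:
  assumes psd: "psd_kernel n f" and q: "q < n"
    and vanish: "\<And>i j. i < n \<Longrightarrow> j < n \<Longrightarrow> i < q \<or> j < q \<Longrightarrow> f i j = 0"
    and i: "i < n" and j: "j < n" and ij: "i \<le> q \<or> j \<le> q"
  shows "f i j - f i q * f q j / f q q = 0"
proof (cases "f q q = 0")
  case True
  have "f k q = 0" "f q k = 0" if "k < n" for k
    using psd_kernel_zero_diag_imp_zero_column[OF psd q that True]
      psd_kernel_hermitian[OF psd that q] by simp_all
  then show ?thesis
    using ij vanish[OF i j] i j by (auto simp: le_less)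
next
  case False
  then show ?thesis
    using ij vanish[OF i j] vanish[OF i q] vanish[OF q j] by (auto simp: le_less)
qed

lemma psd_kernel_gram_partial:
  assumes "k \<le> n" and "psd_kernel n f"
    and "\<And>i j. i < n \<Longrightarrow> j < n \<Longrightarrow> i < n - k \<or> j < n - k \<Longrightarrow> f i j = 0"
  shows "\<exists>w. \<forall>i<n. \<forall>j<n. f i j = (\<Sum>p<k. w p i * cnj (w p j))"
  using assms
proof (induction k arbitrary: f)
  case 0
  then show ?case by auto
next
  case (Suc k)
  define q where "q = n - Suc k"
  have q: "q < n" and nk: "n - k = Suc q" using Suc.prems(1) by (simp_all add: q_def)
  define f' where "f' i j = f i j - f i q * f q j / f q q" for i j
  have "psd_kernel n f'"
    unfolding f'_def by (rule psd_kernel_schur_complement[OF Suc.prems(2) q])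
  moreover have "f' i j = 0" if "i < n" "j < n" "i < n - k \<or> j < n - k" for i j
    unfolding f'_def using that nk Suc.prems(3)
    by (intro schur_complement_vanishes[OF Suc.prems(2) q]) (auto simp: q_def)
  ultimately obtain w where w: "\<forall>i<n. \<forall>j<n. f' i j = (\<Sum>p<k. w p i * cnj (w p j))"
    using Suc.IH Suc.prems(1) by force
  \<comment> \<open>The new Gram vector is column \<open>q\<close> scaled by \<open>1 / sqrt (f q q)\<close>.\<close>
  define s where "s = complex_of_real (sqrt (Re (f q q)))"
  have s: "s * s = f q q" "cnj s = s"
    using psd_kernel_diag_nonneg[OF Suc.prems(2) q]
    by (simp_all add: s_def complex_eq_iff less_eq_complex_def flip: of_real_mult)
  show ?case
  proof (intro exI allI impI)
    fix i j assume i: "i < n" and j: "j < n"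
    have "f i q * f q j / f q q = f i q / s * cnj (f j q / s)"
      using psd_kernel_hermitian[OF Suc.prems(2) q j] s by simp
    then show "f i j = (\<Sum>p<Suc k. (w(k := \<lambda>i. f i q / s)) p i * cnj ((w(k := \<lambda>i. f i q / s)) p j))"
      using w i j by (simp add: f'_def algebra_simps)
  qed
qed

lemma psd_kernel_gram:
  "psd_kernel n f \<Longrightarrow> \<exists>w. \<forall>i<n. \<forall>j<n. f i j = (\<Sum>p<n. w p i * cnj (w p j))"
  by (rule psd_kernel_gram_partial) auto

section \<open>Kronecker products\<close>

lemma mult_add_less_mult_nat: "r < m \<Longrightarrow> k < n \<Longrightarrow> r * n + k < m * (n::nat)"
proof -
  assume "r < m" "k < n"
  then have "r * n + k < Suc r * n" by simp
  also have "\<dots> \<le> m * n" using \<open>r < m\<close> by (intro mult_le_mono1) simp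
  finally show ?thesis .
qed

lemma sum_lessThan_mult_nat: "(\<Sum>i<m * n. g i) = (\<Sum>r<m. \<Sum>k<(n::nat). g (r * n + k))"
proof -
  have "(\<Sum>i<m * n. g i) = (\<Sum>r<m. sum g {r * n..<r * n + n})"
    using sum.nat_group[of g n m] by (simp add: mult.commute)
  also have "\<dots> = (\<Sum>r<m. \<Sum>k<n. g (r * n + k))"
    by (simp add: sum.shift_bounds_nat_ivl[of g 0 _ n, simplified] atLeast0LessThan add.commute)
  finally show ?thesis .
qed

lemma kron_carrier:
  "A \<in> carrier_mat m m \<Longrightarrow> B \<in> carrier_mat n n \<Longrightarrow> kron A B \<in> carrier_mat (m * n) (m * n)"
  unfolding kron_def by simp

lemma kron_index:
  assumes "A \<in> carrier_mat m m" "B \<in> carrier_mat n n" "r < m" "k < n" "s < m" "l < n"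
  shows "kron A B $$ (r * n + k, s * n + l) = A $$ (r, s) * B $$ (k, l)"
  using assms mult_add_less_mult_nat[OF assms(3,4)] mult_add_less_mult_nat[OF assms(5,6)]
  unfolding kron_def by simp

lemma kron_trace:
  assumes "A \<in> carrier_mat m m" "B \<in> carrier_mat n n"
  shows "mtrace (kron A B) = mtrace A * mtrace B"
proof -
  have "mtrace (kron A B) = (\<Sum>r<m. \<Sum>k<n. A $$ (r, r) * B $$ (k, k))"
    unfolding mtrace_def using kron_carrier[OF assms] kron_index[OF assms]
    by (simp add: sum_lessThan_mult_nat)
  also have "\<dots> = mtrace A * mtrace B"
    using assms by (simp add: mtrace_def sum_product)
  finally show ?thesis .
qed

lemma quad_form_tensor_gram:
  assumes "\<And>k l. k < n \<Longrightarrow> l < n \<Longrightarrow> B k l = (\<Sum>p<n. w p k * cnj (w p l))"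
  shows "(\<Sum>r<m. \<Sum>k<n. \<Sum>s<m. \<Sum>l<n. cnj (v (r * n + k)) * A r s * B k l * v (s * n + l))
    = (\<Sum>p<n. quad_form m A (\<lambda>s. \<Sum>l<n. cnj (w p l) * v (s * n + l)))"
proof -
  let ?T = "\<lambda>p r s k l. cnj (v (r * n + k)) * A r s * (w p k * cnj (w p l)) * v (s * n + l)"
  have "(\<Sum>p<n. quad_form m A (\<lambda>s. \<Sum>l<n. cnj (w p l) * v (s * n + l)))
      = (\<Sum>p<n. \<Sum>r<m. \<Sum>s<m. \<Sum>k<n. \<Sum>l<n. ?T p r s k l)"
    unfolding quad_form_def
    by (simp add: sum_distrib_left sum_distrib_right mult.commute mult.left_commute)
  also have "\<dots> = (\<Sum>r<m. \<Sum>p<n. \<Sum>s<m. \<Sum>k<n. \<Sum>l<n. ?T p r s k l)"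
    by (rule sum.swap)
  also have "\<dots> = (\<Sum>r<m. \<Sum>s<m. \<Sum>p<n. \<Sum>k<n. \<Sum>l<n. ?T p r s k l)"
    by (intro sum.cong refl sum.swap)
  also have "\<dots> = (\<Sum>r<m. \<Sum>s<m. \<Sum>k<n. \<Sum>p<n. \<Sum>l<n. ?T p r s k l)"
    by (intro sum.cong refl sum.swap)
  also have "\<dots> = (\<Sum>r<m. \<Sum>s<m. \<Sum>k<n. \<Sum>l<n. \<Sum>p<n. ?T p r s k l)"
    by (intro sum.cong refl sum.swap)
  also have "\<dots> = (\<Sum>r<m. \<Sum>k<n. \<Sum>s<m. \<Sum>l<n. \<Sum>p<n. ?T p r s k l)"
    by (intro sum.cong refl sum.swap)
  also have "\<dots> = (\<Sum>r<m. \<Sum>k<n. \<Sum>s<m. \<Sum>l<n. cnj (v (r * n + k)) * A r s * B k l * v (s * n + l))"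
    using assms by (simp add: sum_distrib_left sum_distrib_right)
  finally show ?thesis ..
qed

\<comment> \<open>Writing \<open>B\<close> as a Gram matrix turns the form of \<open>A \<otimes> B\<close> into a sum of forms of \<open>A\<close>.\<close>
lemma kron_psd:
  assumes A: "psd m A" and B: "psd n B"
  shows "psd (m * n) (kron A B)"
proof -
  have cA: "A \<in> carrier_mat m m" and pA: "psd_kernel m (\<lambda>i j. A $$ (i, j))"
    using A by (simp_all add: psd_iff_psd_kernel)
  have cB: "B \<in> carrier_mat n n" and pB: "psd_kernel n (\<lambda>i j. B $$ (i, j))"
    using B by (simp_all add: psd_iff_psd_kernel)
  obtain w where w: "\<forall>k<n. \<forall>l<n. B $$ (k, l) = (\<Sum>p<n. w p k * cnj (w p l))"
    using psd_kernel_gram[OF pB] by blast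
  have "0 \<le> quad_form (m * n) (\<lambda>i j. kron A B $$ (i, j)) v" for v
  proof -
    have "quad_form (m * n) (\<lambda>i j. kron A B $$ (i, j)) v =
      (\<Sum>r<m. \<Sum>k<n. \<Sum>s<m. \<Sum>l<n. cnj (v (r * n + k)) * A $$ (r, s) * B $$ (k, l) * v (s * n + l))"
      unfolding quad_form_def sum_lessThan_mult_nat
      by (intro sum.cong refl) (simp add: kron_index[OF cA cB] mult.assoc)
    also have "\<dots> = (\<Sum>p<n. quad_form m (\<lambda>i j. A $$ (i, j)) (\<lambda>s. \<Sum>l<n. cnj (w p l) * v (s * n + l)))"
      using w by (intro quad_form_tensor_gram) blast
    finally show ?thesis
      using pA unfolding psd_kernel_def by (simp add: sum_nonneg)
  qed
  then show ?thesis
    by (simp add: psd_iff_psd_kernel psd_kernel_def kron_carrier[OF cA cB])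
qed

lemma kron_density: "density m A \<Longrightarrow> density n B \<Longrightarrow> density (m * n) (kron A B)"
  unfolding density_def
  using kron_psd kron_trace[of A m B n] by (auto simp: psd_def)

section \<open>Channels acting on a subsystem\<close>

lemma channelD:
  assumes "channel n m K"
  shows "0 < n" "0 < m"
    and "X \<in> carrier_mat n n \<Longrightarrow> K X \<in> carrier_mat m m"
    and "X \<in> carrier_mat n n \<Longrightarrow> mtrace (K X) = mtrace X"
    and "X \<in> carrier_mat n n \<Longrightarrow> Y \<in> carrier_mat n n \<Longrightarrow>
      K (a \<cdot>\<^sub>m X + b \<cdot>\<^sub>m Y) = a \<cdot>\<^sub>m K X + b \<cdot>\<^sub>m K Y"
    and "0 < dR \<Longrightarrow> psd (dR * n) Z \<Longrightarrow> psd (dR * m) (id_tensor dR n m K Z)"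
  using assms unfolding channel_def by auto

lemma block_carrier [simp]: "block n X i j \<in> carrier_mat n n"
  unfolding block_def by simp

lemma block_linear:
  assumes "X \<in> carrier_mat (dR * n) (dR * n)" "Y \<in> carrier_mat (dR * n) (dR * n)" "i < dR" "j < dR"
  shows "block n (a \<cdot>\<^sub>m X + b \<cdot>\<^sub>m Y) i j = a \<cdot>\<^sub>m block n X i j + b \<cdot>\<^sub>m block n Y i j"
proof (rule eq_matI)
  fix x y assume "x < dim_row (a \<cdot>\<^sub>m block n X i j + b \<cdot>\<^sub>m block n Y i j)"
    "y < dim_col (a \<cdot>\<^sub>m block n X i j + b \<cdot>\<^sub>m block n Y i j)"
  then have "x < n" "y < n" by (auto simp: block_def)
  with assms show "block n (a \<cdot>\<^sub>m X + b \<cdot>\<^sub>m Y) i j $$ (x, y)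
      = (a \<cdot>\<^sub>m block n X i j + b \<cdot>\<^sub>m block n Y i j) $$ (x, y)"
    using mult_add_less_mult_nat[of i dR x n] mult_add_less_mult_nat[of j dR y n]
    by (simp add: block_def)
qed (auto simp: block_def)

lemma mtrace_block: "mtrace (block n X r r) = (\<Sum>k<n. X $$ (r * n + k, r * n + k))"
  unfolding mtrace_def block_def by (simp add: mult.commute)

lemma id_tensor_trace:
  assumes ch: "channel n m K" and X: "X \<in> carrier_mat (dR * n) (dR * n)"
  shows "mtrace (id_tensor dR n m K X) = mtrace X"
proof -
  have "mtrace (id_tensor dR n m K X)
      = (\<Sum>i<dR * m. K (block n X (i div m) (i div m)) $$ (i mod m, i mod m))"
    unfolding mtrace_def id_tensor_def by simp
  also have "\<dots> = (\<Sum>r<dR. \<Sum>k<m. K (block n X r r) $$ (k, k))"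
    unfolding sum_lessThan_mult_nat by (intro sum.cong refl) simp
  also have "\<dots> = (\<Sum>r<dR. mtrace (K (block n X r r)))"
    using channelD(3)[OF ch block_carrier] unfolding mtrace_def
    by (intro sum.cong refl) (metis carrier_matD(1))
  also have "\<dots> = (\<Sum>r<dR. mtrace (block n X r r))"
    using channelD(4)[OF ch block_carrier] by simp
  also have "\<dots> = mtrace X"
    using X unfolding mtrace_block by (simp add: mtrace_def sum_lessThan_mult_nat)
  finally show ?thesis .
qed

lemma id_tensor_density:
  assumes "channel n m K" "0 < dR" "density (dR * n) X"
  shows "density (dR * m) (id_tensor dR n m K X)"
proof -
  have "psd (dR * n) X" "mtrace X = 1" using assms(3) by (simp_all add: density_def)
  then show ?thesis
    using channelD(6)[OF assms(1,2)] id_tensor_trace[OF assms(1)]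
    unfolding density_def psd_def by simp
qed

lemma block_block:
  assumes "i < dR" "j < dR"
  shows "block n (block (dR * n) X r c) i j = block n X (r * dR + i) (c * dR + j)"
proof (rule eq_matI)
  fix a b assume "a < dim_row (block n X (r * dR + i) (c * dR + j))"
    "b < dim_col (block n X (r * dR + i) (c * dR + j))"
  then have "a < n" "b < n" by (simp_all add: block_def)
  with assms show "block n (block (dR * n) X r c) i j $$ (a, b)
      = block n X (r * dR + i) (c * dR + j) $$ (a, b)"
    using mult_add_less_mult_nat[of i dR a n] mult_add_less_mult_nat[of j dR b n]
    by (simp add: block_def algebra_simps)
qed (simp_all add: block_def)

lemma id_tensor_id_tensor:
  assumes m: "0 < m" and dR: "0 < dR"
  shows "id_tensor dR' (dR * n) (dR * m) (id_tensor dR n m K) X = id_tensor (dR' * dR) n m K X"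
proof (rule eq_matI)
  fix r c
  assume "r < dim_row (id_tensor (dR' * dR) n m K X)" "c < dim_col (id_tensor (dR' * dR) n m K X)"
  then have r: "r < dR' * (dR * m)" and c: "c < dR' * (dR * m)"
    by (simp_all add: id_tensor_def mult.assoc)
  \<comment> \<open>Split each index as \<open>r = (r1 * dR + r2 div m) * m + r2 mod m\<close>.\<close>
  define r1 r2 c1 c2
    where "r1 = r div (dR * m)" "r2 = r mod (dR * m)" "c1 = c div (dR * m)" "c2 = c mod (dR * m)"
  have r2: "r2 < dR * m" "c2 < dR * m" using m dR by (simp_all add: r1_r2_c1_c2_def)
  have "r = (r1 * dR) * m + r2" "c = (c1 * dR) * m + c2"
    unfolding r1_r2_c1_c2_def by (metis div_mult_mod_eq mult.assoc)+
  then have div_m: "r div m = r1 * dR + r2 div m" "c div m = c1 * dR + c2 div m"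
    using m by simp_all
  have mod_m: "r mod m = r2 mod m" "c mod m = c2 mod m"
    by (simp_all add: r1_r2_c1_c2_def mod_mod_cancel)
  have "r2 div m < dR" "c2 div m < dR"
    using r2 by (simp_all add: less_mult_imp_div_less mult.commute)
  then show "id_tensor dR' (dR * n) (dR * m) (id_tensor dR n m K) X $$ (r, c)
      = id_tensor (dR' * dR) n m K X $$ (r, c)"
    using r c r2 unfolding id_tensor_def
    by (simp add: r1_r2_c1_c2_def[symmetric] block_block div_m mod_m mult.assoc)
qed (simp_all add: id_tensor_def mult.assoc)

lemma id_tensor_channel:
  assumes ch: "channel n m K" and dR: "0 < dR"
  shows "channel (dR * n) (dR * m) (id_tensor dR n m K)"
proof -
  have n: "0 < n" and m: "0 < m" using channelD(1,2)[OF ch] .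
  have linear: "id_tensor dR n m K (a \<cdot>\<^sub>m X + b \<cdot>\<^sub>m Y)
      = a \<cdot>\<^sub>m id_tensor dR n m K X + b \<cdot>\<^sub>m id_tensor dR n m K Y"
    if X: "X \<in> carrier_mat (dR * n) (dR * n)" and Y: "Y \<in> carrier_mat (dR * n) (dR * n)" for a b X Y
  proof (rule eq_matI)
    fix r c assume "r < dim_row (a \<cdot>\<^sub>m id_tensor dR n m K X + b \<cdot>\<^sub>m id_tensor dR n m K Y)"
      "c < dim_col (a \<cdot>\<^sub>m id_tensor dR n m K X + b \<cdot>\<^sub>m id_tensor dR n m K Y)"
    then have rc: "r < dR * m" "c < dR * m" by (simp_all add: id_tensor_def)
    then have "r div m < dR" "c div m < dR" by (simp_all add: less_mult_imp_div_less)
    then show "id_tensor dR n m K (a \<cdot>\<^sub>m X + b \<cdot>\<^sub>m Y) $$ (r, c) =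
      (a \<cdot>\<^sub>m id_tensor dR n m K X + b \<cdot>\<^sub>m id_tensor dR n m K Y) $$ (r, c)"
      using rc m channelD(3)[OF ch block_carrier, THEN carrier_matD(1)]
        channelD(3)[OF ch block_carrier, THEN carrier_matD(2)]
      unfolding id_tensor_def
      by (simp add: block_linear[OF X Y] channelD(5)[OF ch block_carrier block_carrier])
  qed (simp_all add: id_tensor_def)
  have cp: "psd (dR' * (dR * m)) (id_tensor dR' (dR * n) (dR * m) (id_tensor dR n m K) X)"
    if "0 < dR'" "psd (dR' * (dR * n)) X" for dR' X
    using channelD(6)[OF ch, of "dR' * dR" X] that dR
    by (simp add: id_tensor_id_tensor[OF m dR] mult.assoc)
  show ?thesis
    unfolding channel_def using n m dR linear cp id_tensor_trace[OF ch]
    by (auto simp: id_tensor_def)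
qed

section \<open>The trace channel and nonnegativity of Fisher information\<close>

definition trace_map :: "complex mat \<Rightarrow> complex mat" where
  "trace_map X = mat 1 1 (\<lambda>_. mtrace X)"

lemma quad_form_slice:
  assumes a: "a < n"
  shows "quad_form (dR * n) f (\<lambda>i. if i mod n = a then v (i div n) else 0)
    = (\<Sum>r<dR. \<Sum>s<dR. cnj (v r) * f (r * n + a) (s * n + a) * v s)"
proof -
  have "quad_form (dR * n) f (\<lambda>i. if i mod n = a then v (i div n) else 0) =
    (\<Sum>r<dR. \<Sum>k<n. \<Sum>s<dR. \<Sum>l<n.
      (if k = a then cnj (v r) else 0) * (f (r * n + k) (s * n + l) * (if l = a then v s else 0)))"
    unfolding quad_form_def sum_lessThan_mult_nat by (intro sum.cong refl) auto
  also have "\<dots> = (\<Sum>r<dR. \<Sum>k<n. (if k = a then cnj (v r) else 0) * (\<Sum>s<dR. f (r * n + k) (s * n + a) * v s))"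
    using a by (simp add: sum_distrib_left sum_mult_delta_right flip: mult.assoc)
  also have "\<dots> = (\<Sum>r<dR. \<Sum>s<dR. cnj (v r) * f (r * n + a) (s * n + a) * v s)"
    using a by (simp only: sum_delta_mult_left) (simp add: sum_distrib_left mult.assoc)
  finally show ?thesis .
qed

lemma mtrace_linear:
  assumes "X \<in> carrier_mat n n" "Y \<in> carrier_mat n n"
  shows "mtrace (a \<cdot>\<^sub>m X + b \<cdot>\<^sub>m Y) = a * mtrace X + b * mtrace Y"
  using assms unfolding mtrace_def by (simp add: sum.distrib sum_distrib_left)

lemma trace_map_channel:
  assumes n: "0 < n"
  shows "channel n 1 trace_map"
proof -
  have cp: "psd (dR * 1) (id_tensor dR n 1 trace_map X)" if "psd (dR * n) X" for dR X
  proof -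
    have psd_X: "psd_kernel (dR * n) (\<lambda>i j. X $$ (i, j))"
      using that by (simp add: psd_iff_psd_kernel)
    have entry: "id_tensor dR n 1 trace_map X $$ (r, s) = (\<Sum>a<n. X $$ (r * n + a, s * n + a))"
      if "r < dR" "s < dR" for r s
      using that unfolding id_tensor_def trace_map_def mtrace_def block_def by (simp add: mult.commute)
    have "0 \<le> quad_form dR (\<lambda>i j. id_tensor dR n 1 trace_map X $$ (i, j)) v" for v
    proof -
      have "quad_form dR (\<lambda>i j. id_tensor dR n 1 trace_map X $$ (i, j)) v =
          (\<Sum>r<dR. \<Sum>s<dR. \<Sum>a<n. cnj (v r) * X $$ (r * n + a, s * n + a) * v s)"
        unfolding quad_form_def using entry by (simp add: sum_distrib_left sum_distrib_right)
      also have "\<dots> = (\<Sum>r<dR. \<Sum>a<n. \<Sum>s<dR. cnj (v r) * X $$ (r * n + a, s * n + a) * v s)"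
        by (intro sum.cong refl sum.swap)
      also have "\<dots> = (\<Sum>a<n. \<Sum>r<dR. \<Sum>s<dR. cnj (v r) * X $$ (r * n + a, s * n + a) * v s)"
        by (rule sum.swap)
      also have "\<dots> = (\<Sum>a<n. quad_form (dR * n) (\<lambda>i j. X $$ (i, j))
          (\<lambda>i. if i mod n = a then v (i div n) else 0))"
        by (simp add: quad_form_slice)
      finally show ?thesis
        using psd_X unfolding psd_kernel_def by (simp add: sum_nonneg)
    qed
    then show ?thesis
      by (simp add: psd_iff_psd_kernel psd_kernel_def id_tensor_def)
  qed
  have linear: "trace_map (a \<cdot>\<^sub>m X + b \<cdot>\<^sub>m Y) = a \<cdot>\<^sub>m trace_map X + b \<cdot>\<^sub>m trace_map Y"
    if "X \<in> carrier_mat n n" "Y \<in> carrier_mat n n" for a b X Y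
    unfolding trace_map_def mtrace_linear[OF that] by (rule eq_matI) auto
  show ?thesis
    unfolding channel_def using n linear cp by (auto simp: trace_map_def mtrace_def)
qed

lemma density_dim_pos: "density n A \<Longrightarrow> 0 < n"
  unfolding density_def psd_def mtrace_def by (cases n) auto

lemma density_trivial: "density 1 (mat 1 1 (\<lambda>_. 1))"
proof -
  have "psd_kernel 1 (\<lambda>i j. mat 1 1 (\<lambda>_. 1) $$ (i, j))"
    by (simp add: psd_kernel_def quad_form_def less_eq_complex_def)
  then show ?thesis
    by (simp add: density_def psd_iff_psd_kernel mtrace_def)
qed

lemma gen_fisherD:
  assumes "gen_fisher I" "channel n m K" "\<And>t. density n (\<rho> t)"
  shows "I \<theta> (\<lambda>t. K (\<rho> t)) \<le> I \<theta> \<rho>"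
  using assms unfolding gen_fisher_def by blast

lemma gen_fisher_nonneg:
  assumes gen: "gen_fisher I" and faithful: "weakly_faithful I" and \<rho>: "\<And>t. density n (\<rho> t)"
  shows "0 \<le> I \<theta> \<rho>"
proof -
  have "trace_map (\<rho> t) = mat 1 1 (\<lambda>_. 1)" for t
    using \<rho>[of t] unfolding density_def trace_map_def by simp
  then have "I \<theta> (\<lambda>t. mat 1 1 (\<lambda>_. 1)) \<le> I \<theta> \<rho>"
    using gen_fisherD[OF gen trace_map_channel[OF density_dim_pos[OF \<rho>]] \<rho>] by simp
  moreover have "I \<theta> (\<lambda>t. mat 1 1 (\<lambda>_. 1)) = 0"
    using faithful density_trivial unfolding weakly_faithful_def by blast
  ultimately show ?thesis by simp
qed

lemma amortized_fisher_le_env_fisher: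
  assumes gen: "gen_fisher I" and faithful: "weakly_faithful I" and subadd: "subadditive_product I"
    and env: "env_parameterized dA dB dE N \<rho>E M"
  shows "amortized_fisher I dA dB \<theta> N \<le> I \<theta> \<rho>E"
  unfolding amortized_fisher_def
proof (rule SUP_least)
  fix p assume "p \<in> {(dR, \<rho>). 0 < dR \<and> (\<forall>t. density (dR * dA) (\<rho> t)) \<and> I \<theta> \<rho> < \<infinity>}"
  then obtain dR \<rho> where p: "p = (dR, \<rho>)" and dR: "0 < dR"
    and \<rho>: "\<forall>t. density (dR * dA) (\<rho> t)" and fin: "I \<theta> \<rho> < \<infinity>"
    by blast
  have M: "channel (dA * dE) dB M" and \<rho>E: "\<And>t. density dE (\<rho>E t)"
    and N_eq: "\<And>t. id_tensor dR dA dB (N t) (\<rho> t) = id_tensor dR (dA * dE) dB M (kron (\<rho> t) (\<rho>E t))"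
    using env \<rho> dR unfolding env_parameterized_def by auto
  have "\<bar>I \<theta> \<rho>\<bar> \<noteq> \<infinity>"
    using gen_fisher_nonneg[OF gen faithful] \<rho> fin by fastforce
  moreover have "I \<theta> (\<lambda>t. id_tensor dR (dA * dE) dB M (kron (\<rho> t) (\<rho>E t)))
      \<le> I \<theta> (\<lambda>t. kron (\<rho> t) (\<rho>E t))"
  proof (rule gen_fisherD[OF gen id_tensor_channel[OF M dR]])
    show "density (dR * (dA * dE)) (kron (\<rho> t) (\<rho>E t))" for t
      using kron_density[OF \<rho>[rule_format] \<rho>E] by (simp add: mult.assoc)
  qed
  moreover have "I \<theta> (\<lambda>t. kron (\<rho> t) (\<rho>E t)) \<le> I \<theta> \<rho> + I \<theta> \<rho>E"
    using subadd \<rho> \<rho>E unfolding subadditive_product_def by blast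
  ultimately show "I \<theta> (\<lambda>t. id_tensor (fst p) dA dB (N t) (snd p t)) - I \<theta> (snd p) \<le> I \<theta> \<rho>E"
    unfolding p by (simp add: N_eq ereal_minus_le add.commute)
qed

lemma env_fisher_le_amortized_fisher:
  assumes gen: "gen_fisher I" and faithful: "weakly_faithful I"
    and N: "\<And>t. channel dA dB (N t)"
    and dR: "0 < dR" and \<zeta>: "density (dR * dA) \<zeta>" and D: "channel (dR * dB) dE D"
    and seize: "\<And>t. D (id_tensor dR dA dB (N t) \<zeta>) = \<rho>E t"
  shows "I \<theta> \<rho>E \<le> amortized_fisher I dA dB \<theta> N"
proof -
  have \<zeta>_zero: "I \<theta> (\<lambda>t. \<zeta>) = 0"
    using faithful \<zeta> unfolding weakly_faithful_def by blast
  have "I \<theta> \<rho>E = I \<theta> (\<lambda>t. D (id_tensor dR dA dB (N t) \<zeta>))"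
    using seize by simp
  also have "\<dots> \<le> I \<theta> (\<lambda>t. id_tensor dR dA dB (N t) \<zeta>) - I \<theta> (\<lambda>t. \<zeta>)"
    unfolding \<zeta>_zero using gen_fisherD[OF gen D] id_tensor_density[OF N dR \<zeta>] by simp
  also have "\<dots> \<le> amortized_fisher I dA dB \<theta> N"
    unfolding amortized_fisher_def using dR \<zeta> \<zeta>_zero
    by (intro SUP_upper2[where i = "(dR, \<lambda>t. \<zeta>)"]) auto
  finally show ?thesis .
qed

theorem mainTheorem19:
  fixes I :: fisher
    and dA dB dE :: nat
    and N :: "real \<Rightarrow> complex mat \<Rightarrow> complex mat"
    and \<rho>E :: "real \<Rightarrow> complex mat"
    and \<theta> :: real
  assumes "gen_fisher I"
    and "weakly_faithful I"
    and "subadditive_product I"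
    and "env_seizable dA dB dE N \<rho>E"
  shows "amortized_fisher I dA dB \<theta> N = I \<theta> \<rho>E"
proof (rule antisym)
  obtain M where env: "env_parameterized dA dB dE N \<rho>E M"
    using assms(4) unfolding env_seizable_def by blast
  then show "amortized_fisher I dA dB \<theta> N \<le> I \<theta> \<rho>E"
    using amortized_fisher_le_env_fisher assms(1-3) by blast
  obtain dR \<zeta> D where "0 < dR" "density (dR * dA) \<zeta>" "channel (dR * dB) dE D"
    "\<And>t. D (id_tensor dR dA dB (N t) \<zeta>) = \<rho>E t"
    using assms(4) unfolding env_seizable_def by blast
  moreover have "\<And>t. channel dA dB (N t)"
    using env unfolding env_parameterized_def by blast
  ultimately show "I \<theta> \<rho>E \<le> amortized_fisher I dA dB \<theta> N"
    using env_fisher_le_amortized_fisher assms(1,2) by blast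
qed

end
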